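(* Let $P$ be a generic set of $n$ points in convex position in the plane. If each point of $P$ is colored red or blue independently and uniformly at random, giving $P=R\cup B$, then $\mathbb{E}[\operatorname{cr}(R,B)]\ge n/4-1$.
   Context: A finite planar point set is generic if no three of its points are collinear and every subset has a unique Euclidean minimum spanning tree (MST). For a generic set $X$, $T_X$ denotes its MST, drawn with straight-line edges. For disjoint $R,B$ with $R\cup B$ generic, $\operatorname{cr}(R,B)$ is the number of crossings between the edges of $T_R$ and the edges of $T_B$. *)

theory Defs
  imports "HOL-Analysis.Analysis"
begin

type_synonym point = "real \<times> real"

definition edges_on :: "point set \<Rightarrow> point set set" where
  "edges_on X = {{a, b} | a b. a \<in> X \<and> b \<in> X \<and> a \<noteq> b}"

definition edge_rel :: "point set set \<Rightarrow> (point \<times> point) set" where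
  "edge_rel E = {(a, b). {a, b} \<in> E}"

definition spanning_tree :: "point set \<Rightarrow> point set set \<Rightarrow> bool" where
  "spanning_tree X E \<longleftrightarrow> E \<subseteq> edges_on X \<and>
     (\<forall>a\<in>X. \<forall>b\<in>X. (a, b) \<in> (edge_rel E)\<^sup>*) \<and> card E = card X - 1"

definition edge_len :: "point set \<Rightarrow> real" where
  "edge_len e = Max ((\<lambda>(a, b). dist a b) ` (e \<times> e))"

definition tree_weight :: "point set set \<Rightarrow> real" where
  "tree_weight E = (\<Sum>e\<in>E. edge_len e)"

definition is_MST :: "point set \<Rightarrow> point set set \<Rightarrow> bool" where
  "is_MST X E \<longleftrightarrow> spanning_tree X E \<and>
     (\<forall>E'. spanning_tree X E' \<longrightarrow> tree_weight E \<le> tree_weight E')"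

text \<open>T_X: the (unique, for generic sets) Euclidean minimum spanning tree.\<close>
definition MST :: "point set \<Rightarrow> point set set" where
  "MST X = (THE E. is_MST X E)"

definition generic :: "point set \<Rightarrow> bool" where
  "generic P \<longleftrightarrow> finite P \<and>
     (\<forall>a\<in>P. \<forall>b\<in>P. \<forall>c\<in>P. a \<noteq> b \<and> a \<noteq> c \<and> b \<noteq> c \<longrightarrow> \<not> collinear {a, b, c}) \<and>
     (\<forall>S\<subseteq>P. \<exists>!E. is_MST S E)"

definition convex_position :: "point set \<Rightarrow> bool" where
  "convex_position P \<longleftrightarrow> (\<forall>p\<in>P. p \<notin> convex hull (P - {p}))"

text \<open>Number of pairs (e, f) of an edge of T_R and an edge of T_B whose straight-line
  segments intersect (for disjoint R, B with R \<union> B generic, these are proper crossings).\<close>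
definition cr :: "point set \<Rightarrow> point set \<Rightarrow> nat" where
  "cr R B = card {(e, f). e \<in> MST R \<and> f \<in> MST B \<and> convex hull e \<inter> convex hull f \<noteq> {}}"

end

theory Submission
  imports Defs
begin

text \<open>
  Orient the boundary of the convex polygon P counterclockwise. For a colouring P = R \<union> B,
  call a boundary edge (p, q) leaving if p \<in> R and q \<in> B. Delete from T_R every edge whose line
  strictly separates two blue points. The red tails x, y of two leaving edges (x, q), (y, q')
  then lie in different components: the line qq' separates x from y, so a red path from x to y
  has an edge uv crossing that line, and since the four points are in convex position, uv in
  turn separates q from q'. Hence the number of leaving edges is at most one more than the
  number of separating red edges. Each separating red edge crosses the path of T_B between the
  two blue points it separates, so it crosses an edge of T_B, and the number of leaving edges
  is at most cr(R, B) + 1. Each of the n boundary edges is leaving for a quarter of all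
  colourings, which gives E[cr(R, B)] \<ge> n/4 - 1.
\<close>

section \<open>Orientation and crossing segments\<close>

text \<open>Twice the signed area of the triangle abc; positive iff a, b, c turn counterclockwise.\<close>
definition orient :: "point \<Rightarrow> point \<Rightarrow> point \<Rightarrow> real" where
  "orient a b c = (fst b - fst a) * (snd c - snd a) - (snd b - snd a) * (fst c - fst a)"

lemma orient_rotate: "orient a b c = orient b c a"
  and orient_swap: "orient a b c = - orient a c b"
  unfolding orient_def by algebra+

lemma parallel_if_cross_eq_0:
  fixes x y :: "real \<times> real"
  assumes "fst x * snd y - snd x * fst y = 0"
  shows "inner x x *\<^sub>R y = inner x y *\<^sub>R x"
proof -
  obtain x1 x2 y1 y2 where "x = (x1, x2)" "y = (y1, y2)" by fastforce
  moreover have "(x1 * x1 + x2 * x2) * y1 = (x1 * y1 + x2 * y2) * x1"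
    and "(x1 * x1 + x2 * x2) * y2 = (x1 * y1 + x2 * y2) * x2"
    if "x1 * y2 - x2 * y1 = 0" for x1 x2 y1 y2 :: real
    using that by algebra+
  ultimately show ?thesis using assms by (simp add: inner_prod_def)
qed

lemma collinear_if_orient_eq_0:
  assumes "orient a b c = 0"
  shows "collinear {a, b, c}"
proof -
  let ?x = "b - a" and ?y = "c - a"
  have "\<exists>t. ?y = t *\<^sub>R ?x" if "?x \<noteq> 0"
  proof
    have nz: "inner ?x ?x \<noteq> 0" using that by simp
    have "inner ?x ?x *\<^sub>R ?y = inner ?x ?y *\<^sub>R ?x"
      using assms by (intro parallel_if_cross_eq_0) (simp add: orient_def)
    then have "(1 / inner ?x ?x) *\<^sub>R (inner ?x ?x *\<^sub>R ?y) = (inner ?x ?y / inner ?x ?x) *\<^sub>R ?x"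
      by simp
    then show "?y = (inner ?x ?y / inner ?x ?x) *\<^sub>R ?x" using nz by simp
  qed
  then have "collinear {0, ?x, ?y}" by (auto simp: collinear_lemma)
  then have "collinear {b, a, c}" by (subst collinear_3) simp
  then show ?thesis by (simp add: insert_commute)
qed

lemma generic_finite: "generic P \<Longrightarrow> finite P"
  unfolding generic_def by (rule conjunct1)

lemma generic_orient_nonzero:
  assumes "generic P" "a \<in> P" "b \<in> P" "c \<in> P" "a \<noteq> b" "a \<noteq> c" "b \<noteq> c"
  shows "orient a b c \<noteq> 0"
proof
  assume "orient a b c = 0"
  then have "collinear {a, b, c}" by (rule collinear_if_orient_eq_0)
  with assms show False unfolding generic_def by blast
qed

lemma orient_affine_dependence:
  "orient b d c *\<^sub>R a + orient a c d *\<^sub>R b = orient b d a *\<^sub>R c + orient a c b *\<^sub>R d"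
  "orient b d c + orient a c d = orient b d a + orient a c b"
  unfolding orient_def by (simp_all add: prod_eq_iff algebra_simps)

lemma in_convex_hull_3_if_weighted:
  fixes x a b c :: "'a::real_vector"
  assumes "s *\<^sub>R x = u *\<^sub>R a + v *\<^sub>R b + w *\<^sub>R c" "s = u + v + w" "s \<noteq> 0"
    and "0 \<le> u * s" "0 \<le> v * s" "0 \<le> w * s"
  shows "x \<in> convex hull {a, b, c}"
  unfolding convex_hull_3
proof (intro CollectI exI conjI)
  have "x = (1 / s) *\<^sub>R (s *\<^sub>R x)" using assms(3) by simp
  then show "x = (u / s) *\<^sub>R a + (v / s) *\<^sub>R b + (w / s) *\<^sub>R c"
    unfolding assms(1) by (simp add: scaleR_add_right)
  show "0 \<le> u / s" "0 \<le> v / s" "0 \<le> w / s"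
    using assms(4-6) by (simp_all add: zero_le_divide_iff zero_le_mult_iff)
  show "u / s + v / s + w / s = 1"
    using assms(2,3) by (simp add: add_divide_distrib[symmetric])
qed

lemma in_convex_hull_2_if_weighted:
  fixes x a b :: "'a::real_vector"
  assumes "s *\<^sub>R x = u *\<^sub>R a + v *\<^sub>R b" "s = u + v" "s \<noteq> 0" "0 \<le> u * s" "0 \<le> v * s"
  shows "x \<in> convex hull {a, b}"
  using in_convex_hull_3_if_weighted[of s x u a v b 0 b] assms by simp

lemma segments_intersect_if_separating:
  assumes "orient a c b * orient a c d < 0" "orient b d a * orient b d c < 0"
  shows "convex hull {a, c} \<inter> convex hull {b, d} \<noteq> {}"
proof -
  define \<alpha> where "\<alpha> = orient a c b"
  define \<beta> where "\<beta> = orient a c d"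
  define \<gamma> where "\<gamma> = orient b d a"
  define \<delta> where "\<delta> = orient b d c"
  have dep: "\<delta> *\<^sub>R a + \<beta> *\<^sub>R b = \<gamma> *\<^sub>R c + \<alpha> *\<^sub>R d" "\<delta> + \<beta> = \<gamma> + \<alpha>"
    using orient_affine_dependence[of b d c a] by (simp_all add: \<alpha>_def \<beta>_def \<gamma>_def \<delta>_def)
  define s where "s = \<delta> - \<gamma>"
  define x where "x = (1 / s) *\<^sub>R (\<delta> *\<^sub>R a - \<gamma> *\<^sub>R c)"
  have s: "s \<noteq> 0" "s = \<alpha> - \<beta>"
    using assms dep(2) unfolding s_def \<alpha>_def \<beta>_def \<gamma>_def \<delta>_def
    by (auto simp: mult_less_0_iff)
  have sx: "s *\<^sub>R x = \<delta> *\<^sub>R a + (- \<gamma>) *\<^sub>R c"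
    using s(1) by (simp add: x_def)
  also have "\<dots> = \<alpha> *\<^sub>R d + (- \<beta>) *\<^sub>R b"
    using dep(1) by (simp add: algebra_simps)
  finally have sx': "s *\<^sub>R x = \<alpha> *\<^sub>R d + (- \<beta>) *\<^sub>R b" .
  have signs: "\<alpha> > 0 \<and> \<beta> < 0 \<or> \<alpha> < 0 \<and> \<beta> > 0"
    "\<gamma> > 0 \<and> \<delta> < 0 \<or> \<gamma> < 0 \<and> \<delta> > 0"
    using assms unfolding \<alpha>_def \<beta>_def \<gamma>_def \<delta>_def by (auto simp: mult_less_0_iff)
  have "x \<in> convex hull {a, c}"
    by (rule in_convex_hull_2_if_weighted[OF sx])
      (use signs in \<open>auto simp: s_def zero_le_mult_iff mult_le_0_iff\<close>)
  moreover have "x \<in> convex hull {d, b}"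
    by (rule in_convex_hull_2_if_weighted[OF sx'])
      (use signs in \<open>auto simp: s zero_le_mult_iff mult_le_0_iff\<close>)
  ultimately show ?thesis by (auto simp: insert_commute)
qed

lemma convex_position_not_in_triangle:
  assumes "convex_position P" "x \<in> P" "a \<in> P - {x}" "b \<in> P - {x}" "c \<in> P - {x}"
  shows "x \<notin> convex hull {a, b, c}"
proof
  assume "x \<in> convex hull {a, b, c}"
  moreover have "convex hull {a, b, c} \<subseteq> convex hull (P - {x})"
    using assms(3-5) by (intro hull_mono) auto
  ultimately show False using assms(1,2) unfolding convex_position_def by blast
qed

lemma convex_position_separation_sym:
  assumes g: "generic P" and cp: "convex_position P"
    and P: "a \<in> P" "b \<in> P" "c \<in> P" "d \<in> P"
    and distinct: "a \<noteq> b" "a \<noteq> c" "a \<noteq> d" "b \<noteq> c" "b \<noteq> d" "c \<noteq> d"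
    and sep: "orient a c b * orient a c d < 0"
  shows "orient b d a * orient b d c < 0"
proof (rule ccontr)
  define \<alpha> where "\<alpha> = orient a c b"
  define \<beta> where "\<beta> = orient a c d"
  define \<gamma> where "\<gamma> = orient b d a"
  define \<delta> where "\<delta> = orient b d c"
  have dep: "\<delta> *\<^sub>R a + \<beta> *\<^sub>R b = \<gamma> *\<^sub>R c + \<alpha> *\<^sub>R d" "\<delta> + \<beta> = \<gamma> + \<alpha>"
    using orient_affine_dependence[of b d c a] by (simp_all add: \<alpha>_def \<beta>_def \<gamma>_def \<delta>_def)
  have "\<gamma> \<noteq> 0" "\<delta> \<noteq> 0"
    unfolding \<gamma>_def \<delta>_def using generic_orient_nonzero[OF g] P distinct by auto
  moreover assume "\<not> orient b d a * orient b d c < 0"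
  ultimately have same: "\<gamma> * \<delta> > 0"
    unfolding \<gamma>_def \<delta>_def by (metis linorder_neqE_linordered_idom mult_eq_0_iff)
  have opp: "\<alpha> * \<beta> < 0" using sep unfolding \<alpha>_def \<beta>_def .
  \<comment> \<open>Now the dependence exhibits a or c as a convex combination of the other three points.\<close>
  consider "\<alpha> * \<gamma> > 0" | "\<alpha> * \<gamma> < 0"
    using opp \<open>\<gamma> \<noteq> 0\<close> by (metis linorder_neqE_linordered_idom mult_eq_0_iff mult_zero_left)
  then show False
  proof cases
    case 1
    have "\<delta> *\<^sub>R a = \<gamma> *\<^sub>R c + \<alpha> *\<^sub>R d + (- \<beta>) *\<^sub>R b"
      using dep(1) by (simp add: algebra_simps)
    then have "a \<in> convex hull {c, d, b}"
      by (rule in_convex_hull_3_if_weighted)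
        (use dep(2) same opp 1 in
          \<open>auto simp: zero_less_mult_iff mult_less_0_iff zero_le_mult_iff mult_le_0_iff\<close>)
    then show False
      using convex_position_not_in_triangle[OF cp, of a c d b] P distinct by auto
  next
    case 2
    have "\<gamma> *\<^sub>R c = \<delta> *\<^sub>R a + \<beta> *\<^sub>R b + (- \<alpha>) *\<^sub>R d"
      using dep(1) by (simp add: algebra_simps)
    then have "c \<in> convex hull {a, b, d}"
      by (rule in_convex_hull_3_if_weighted)
        (use dep(2) same opp 2 in
          \<open>auto simp: zero_less_mult_iff mult_less_0_iff zero_le_mult_iff mult_le_0_iff\<close>)
    then show False
      using convex_position_not_in_triangle[OF cp, of c a b d] P distinct by auto
  qed
qed

section \<open>Connectivity in edge sets\<close>

lemma rtrancl_exit_step: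
  assumes "(x, y) \<in> r\<^sup>*" "Q x" "\<not> Q y"
  shows "\<exists>u v. (u, v) \<in> r \<and> Q u \<and> \<not> Q v"
  using assms by (induction rule: rtrancl_induct) auto

lemma rtrancl_Un_reaches_Domain:
  assumes "(x, y) \<in> (r \<union> s)\<^sup>*"
  shows "(x, y) \<in> r\<^sup>* \<or> (\<exists>d\<in>Domain s. (x, d) \<in> r\<^sup>*)"
  using assms
proof (induction rule: converse_rtrancl_induct)
  case (step x z)
  then show ?case by (meson DomainI UnE converse_rtrancl_into_rtrancl rtrancl.rtrancl_refl)
qed simp

lemma edge_rel_rtrancl_sym: "(u, v) \<in> (edge_rel E)\<^sup>* \<Longrightarrow> (v, u) \<in> (edge_rel E)\<^sup>*"
proof -
  have "sym (edge_rel E)" unfolding sym_def edge_rel_def by (simp add: insert_commute)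
  then show "(u, v) \<in> (edge_rel E)\<^sup>* \<Longrightarrow> (v, u) \<in> (edge_rel E)\<^sup>*"
    using sym_rtrancl unfolding sym_def by blast
qed

lemma edge_rel_insert: "edge_rel (insert e F) = edge_rel F \<union> {(u, v). {u, v} = e}"
  unfolding edge_rel_def by auto

lemma edge_rel_edges_on:
  assumes "E \<subseteq> edges_on X" "(u, v) \<in> edge_rel E"
  shows "u \<in> X" "v \<in> X" "u \<noteq> v"
proof -
  obtain a b where "{u, v} = {a, b}" "a \<in> X" "b \<in> X" "a \<noteq> b"
    using assms unfolding edge_rel_def edges_on_def by blast
  then show "u \<in> X" "v \<in> X" "u \<noteq> v" by (auto simp: doubleton_eq_iff)
qed

lemma finite_edges_on: "finite X \<Longrightarrow> finite (edges_on X)"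
proof -
  have "edges_on X \<subseteq> (\<lambda>(a, b). {a, b}) ` (X \<times> X)" unfolding edges_on_def by auto
  then show "finite X \<Longrightarrow> finite (edges_on X)" using finite_subset by blast
qed

lemma card_pairwise_disconnected_le:
  assumes "finite S" "\<forall>e\<in>S. \<exists>a b. e = {a, b}" "finite X"
    and "\<forall>x\<in>X. \<forall>y\<in>X. (x, y) \<in> (edge_rel (F \<union> S))\<^sup>*"
    and "\<forall>x\<in>X. \<forall>y\<in>X. x \<noteq> y \<longrightarrow> (x, y) \<notin> (edge_rel F)\<^sup>*"
  shows "card X \<le> card S + 1"
  using assms
proof (induction S arbitrary: F X rule: finite_induct)
  case empty
  then have "\<forall>x\<in>X. \<forall>y\<in>X. x = y" by auto
  then show ?case using card_le_Suc0_iff_eq[OF empty.prems(2)] by simp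
next
  case (insert e S)
  obtain a b where e: "e = {a, b}" using insert.prems(1) by blast
  let ?r = "edge_rel F"
  define Y where "Y = {x \<in> X. (x, a) \<in> ?r\<^sup>*}"
  have "\<forall>x\<in>Y. \<forall>y\<in>Y. x = y"
  proof (intro ballI)
    fix x y assume "x \<in> Y" "y \<in> Y"
    then have "(x, a) \<in> ?r\<^sup>*" "(a, y) \<in> ?r\<^sup>*" "x \<in> X" "y \<in> X"
      unfolding Y_def by (auto intro: edge_rel_rtrancl_sym)
    then show "x = y" using insert.prems(4) rtrancl_trans by metis
  qed
  then have card_Y: "card Y \<le> 1"
    using card_le_Suc0_iff_eq[of Y] insert.prems(2) unfolding Y_def by simp
  have "Domain {(u, v). {u, v} = e} \<subseteq> {a, b}"
    unfolding e by (auto simp: doubleton_eq_iff)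
  then have reaches_b: "(z, b) \<in> ?r\<^sup>*"
    if "(z, w) \<in> (edge_rel (insert e F))\<^sup>*" "(z, w) \<notin> ?r\<^sup>*" "(z, a) \<notin> ?r\<^sup>*" for z w
    using rtrancl_Un_reaches_Domain[OF that(1)[unfolded edge_rel_insert]] that(2,3) by blast
  have disconnected: "(x, y) \<notin> (edge_rel (insert e F))\<^sup>*"
    if "x \<in> X - Y" "y \<in> X - Y" "x \<noteq> y" for x y
  proof
    assume xy: "(x, y) \<in> (edge_rel (insert e F))\<^sup>*"
    have not_F: "(x, y) \<notin> ?r\<^sup>*" "(y, x) \<notin> ?r\<^sup>*" "(x, a) \<notin> ?r\<^sup>*" "(y, a) \<notin> ?r\<^sup>*"
      using insert.prems(4) that unfolding Y_def by auto
    have "(x, b) \<in> ?r\<^sup>*" using reaches_b[OF xy not_F(1,3)] .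
    moreover have "(b, y) \<in> ?r\<^sup>*"
      using reaches_b[OF edge_rel_rtrancl_sym[OF xy] not_F(2,4)] by (rule edge_rel_rtrancl_sym)
    ultimately show False using not_F(1) rtrancl_trans by metis
  qed
  have "card (X - Y) \<le> card S + 1"
    using insert.prems disconnected by (intro insert.IH[where F = "insert e F"]) auto
  moreover have "card X \<le> card (X - Y) + card Y"
    using card_Un_le[of "X - Y" Y] unfolding Y_def by (simp add: Un_absorb2)
  ultimately show ?case using card_Y insert.hyps by simp
qed

lemma path_edge_crossing_line:
  assumes g: "generic P" and E: "E \<subseteq> edges_on X" "X \<subseteq> P"
    and uv: "u \<in> P" "v \<in> P" "u \<noteq> v" "u \<notin> X" "v \<notin> X"
    and path: "(x, y) \<in> (edge_rel E)\<^sup>*" "orient u v x > 0" "orient u v y < 0"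
  shows "\<exists>w z. {w, z} \<in> E \<and> w \<in> X \<and> z \<in> X \<and> w \<noteq> z \<and>
    orient u v w * orient u v z < 0"
proof -
  obtain w z where wz: "(w, z) \<in> edge_rel E" "orient u v w > 0" "\<not> orient u v z > 0"
    using rtrancl_exit_step[OF path(1), of "\<lambda>p. orient u v p > 0"] path(2,3) by auto
  have "w \<in> X" "z \<in> X" "w \<noteq> z" using edge_rel_edges_on[OF E(1) wz(1)] by auto
  moreover have "orient u v z \<noteq> 0"
    using generic_orient_nonzero[OF g] uv E(2) \<open>z \<in> X\<close> by blast
  moreover have "{w, z} \<in> E" using wz(1) unfolding edge_rel_def by simp
  moreover have "orient u v w * orient u v z < 0"
    using wz(2,3) \<open>orient u v z \<noteq> 0\<close> by (simp add: mult_less_0_iff)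
  ultimately show ?thesis by blast
qed

lemma is_MST_MST:
  assumes "generic P" "S \<subseteq> P"
  shows "is_MST S (MST S)"
proof -
  have "\<exists>!E. is_MST S E" using assms unfolding generic_def by blast
  then show ?thesis unfolding MST_def by (rule theI')
qed

lemma
  assumes "generic P" "S \<subseteq> P"
  shows MST_subset_edges_on: "MST S \<subseteq> edges_on S"
    and MST_connected: "\<And>a b. a \<in> S \<Longrightarrow> b \<in> S \<Longrightarrow> (a, b) \<in> (edge_rel (MST S))\<^sup>*"
    and finite_MST: "finite (MST S)"
proof -
  have "spanning_tree S (MST S)" using is_MST_MST[OF assms] unfolding is_MST_def by blast
  then show sub: "MST S \<subseteq> edges_on S"
    and "\<And>a b. a \<in> S \<Longrightarrow> b \<in> S \<Longrightarrow> (a, b) \<in> (edge_rel (MST S))\<^sup>*"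
    unfolding spanning_tree_def by blast+
  have "finite S" using assms generic_finite finite_subset by blast
  then show "finite (MST S)" using sub finite_edges_on finite_subset by blast
qed

section \<open>Boundary edges of a point set in convex position\<close>

definition hull_edges :: "point set \<Rightarrow> (point \<times> point) set" where
  "hull_edges P =
     {(p, q). p \<in> P \<and> q \<in> P \<and> p \<noteq> q \<and> (\<forall>x\<in>P - {p, q}. orient p q x > 0)}"

lemma hull_edges_succ_unique:
  assumes "(p, q) \<in> hull_edges P" "(p, q') \<in> hull_edges P"
  shows "q = q'"
proof (rule ccontr)
  assume "q \<noteq> q'"
  then have "orient p q q' > 0" "orient p q' q > 0" using assms unfolding hull_edges_def by auto
  then show False using orient_swap[of p q q'] by linarith
qed

lemma hull_edges_pred_unique:
  assumes "(p, q) \<in> hull_edges P" "(p', q) \<in> hull_edges P"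
  shows "p = p'"
proof (rule ccontr)
  assume "p \<noteq> p'"
  then have "orient p q p' > 0" "orient p' q p > 0" using assms unfolding hull_edges_def by auto
  then show False using orient_rotate[of p q p'] orient_rotate[of q p' p] orient_swap[of p' q p]
    by linarith
qed

lemma hull_edges_separate:
  assumes "(p, q) \<in> hull_edges P" "(p', q') \<in> hull_edges P"
    and "p \<noteq> p'" "q \<noteq> q'" "p \<noteq> q'" "p' \<noteq> q"
  shows "orient q q' p > 0" "orient q q' p' < 0"
proof -
  have "orient p q q' > 0" "orient p' q' q > 0" using assms unfolding hull_edges_def by auto
  then show "orient q q' p > 0" "orient q q' p' < 0"
    using orient_rotate[of p q q'] orient_rotate[of p' q' q] orient_swap[of q' q p']
      orient_rotate[of q q' p'] by linarith+
qed

lemma convex_position_supporting_direction: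
  assumes "finite P" "convex_position P" "p \<in> P"
  obtains w where "\<And>x. x \<in> P - {p} \<Longrightarrow> inner w p < inner w x"
proof -
  have "p \<notin> convex hull (P - {p})" using assms(2,3) unfolding convex_position_def by blast
  moreover have "closed (convex hull (P - {p}))"
    using assms(1) by (simp add: compact_imp_closed finite_imp_compact_convex_hull)
  ultimately obtain w c where "inner w p < c" "\<forall>x\<in>convex hull (P - {p}). c < inner w x"
    using separating_hyperplane_closed_point[OF convex_convex_hull] by blast
  then show thesis by (meson hull_inc less_trans that)
qed

lemma orient_mult_inner_self:
  "orient p q y * inner w w =
     inner w (q - p) * orient 0 w (y - p) - orient 0 w (q - p) * inner w (y - p)"
  unfolding orient_def inner_prod_def by (simp add: algebra_simps)

lemma hull_edges_succ_exists:
  assumes g: "generic P" and cp: "convex_position P" and p: "p \<in> P" and q0: "q0 \<in> P" "q0 \<noteq> p"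
  obtains q where "(p, q) \<in> hull_edges P"
proof -
  have fin: "finite (P - {p})" using generic_finite[OF g] by simp
  obtain w where w: "\<And>x. x \<in> P - {p} \<Longrightarrow> inner w p < inner w x"
    using convex_position_supporting_direction[OF generic_finite[OF g] cp p] by blast
  then have w_pos: "inner w (x - p) > 0" if "x \<in> P - {p}" for x
    using that by (simp add: inner_diff_right)
  have "w \<noteq> 0" using w[of q0] q0 by auto
  \<comment> \<open>In coordinates with first axis w, p sees every other point in the open right half-plane;
    the point q of least slope seen from p leaves all others to the left of pq.\<close>
  define slope where "slope x = orient 0 w (x - p) / inner w (x - p)" for x
  obtain q where q: "q \<in> P - {p}" "\<And>y. y \<in> P - {p} \<Longrightarrow> slope q \<le> slope y"
    using ex_is_arg_min_if_finite[OF fin, of slope] q0 unfolding is_arg_min_linorder by blast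
  have "orient p q y > 0" if y: "y \<in> P - {p, q}" for y
  proof -
    have "orient 0 w (q - p) * inner w (y - p) \<le> orient 0 w (y - p) * inner w (q - p)"
      using q(2)[of y] y w_pos[of q] w_pos[of y] q(1) by (simp add: slope_def field_simps)
    then have "orient p q y * inner w w \<ge> 0"
      unfolding orient_mult_inner_self by (simp add: algebra_simps)
    moreover have "inner w w > 0" using \<open>w \<noteq> 0\<close> by simp
    ultimately have "orient p q y \<ge> 0" by (simp add: zero_le_mult_iff)
    moreover have "orient p q y \<noteq> 0"
      by (rule generic_orient_nonzero[OF g p]) (use q(1) y in auto)
    ultimately show ?thesis by simp
  qed
  then have "(p, q) \<in> hull_edges P" using p q(1) unfolding hull_edges_def by auto
  then show thesis by (rule that)
qed

lemma finite_hull_edges: "finite P \<Longrightarrow> finite (hull_edges P)"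
  by (rule finite_subset[of _ "P \<times> P"]) (auto simp: hull_edges_def)

lemma card_hull_edges_ge:
  assumes g: "generic P" and cp: "convex_position P" and two: "2 \<le> card P"
  shows "card P \<le> card (hull_edges P)"
proof -
  have "P \<subseteq> fst ` hull_edges P"
  proof
    fix p assume p: "p \<in> P"
    have "\<not> P \<subseteq> {p}" using two card_mono[of "{p}" P] by auto
    then obtain q0 where "q0 \<in> P" "q0 \<noteq> p" by blast
    then obtain q where "(p, q) \<in> hull_edges P" using hull_edges_succ_exists[OF g cp p] by blast
    then show "p \<in> fst ` hull_edges P" by force
  qed
  then have "card P \<le> card (fst ` hull_edges P)"
    using finite_hull_edges[OF generic_finite[OF g]] by (intro card_mono) auto
  also have "\<dots> \<le> card (hull_edges P)"
    by (rule card_image_le[OF finite_hull_edges[OF generic_finite[OF g]]])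
  finally show ?thesis .
qed

section \<open>Leaving boundary edges versus crossings\<close>

definition separating_edges :: "point set \<Rightarrow> point set \<Rightarrow> point set set" where
  "separating_edges R B = {e \<in> MST R. \<exists>u v b b'. e = {u, v} \<and> b \<in> B \<and> b' \<in> B \<and>
     orient u v b * orient u v b' < 0}"

lemma separating_edge_crosses_MST:
  assumes g: "generic P" and cp: "convex_position P" and R: "R \<subseteq> P"
    and e: "e \<in> separating_edges R (P - R)"
  shows "\<exists>f\<in>MST (P - R). convex hull e \<inter> convex hull f \<noteq> {}"
proof -
  let ?B = "P - R"
  obtain u v b b' where uv: "e = {u, v}" "e \<in> MST R" and b: "b \<in> ?B" "b' \<in> ?B"
    and sep: "orient u v b * orient u v b' < 0"
    using e unfolding separating_edges_def by blast
  have "(u, v) \<in> edge_rel (MST R)" using uv unfolding edge_rel_def by simp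
  then have u_v: "u \<in> R" "v \<in> R" "u \<noteq> v"
    using edge_rel_edges_on[OF MST_subset_edges_on[OF g R]] by auto
  obtain x y where xy: "x \<in> ?B" "y \<in> ?B" "orient u v x > 0" "orient u v y < 0"
    using b sep by (metis mult_less_0_iff)
  have "(x, y) \<in> (edge_rel (MST ?B))\<^sup>*" using MST_connected[OF g _ xy(1,2)] by blast
  then obtain w z where wz: "{w, z} \<in> MST ?B" "w \<in> ?B" "z \<in> ?B" "w \<noteq> z"
      "orient u v w * orient u v z < 0"
    using path_edge_crossing_line[OF g MST_subset_edges_on[OF g] _ _ _ u_v(3) _ _ _ xy(3,4),
        of ?B] u_v R
    by blast
  then have "orient w z u * orient w z v < 0"
    using convex_position_separation_sym[OF g cp, of u w v z] u_v R by auto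
  then have "convex hull {u, v} \<inter> convex hull {w, z} \<noteq> {}"
    using segments_intersect_if_separating wz(5) by blast
  then show ?thesis using wz(1) uv(1) by blast
qed

lemma card_separating_edges_le_cr:
  assumes g: "generic P" and cp: "convex_position P" and R: "R \<subseteq> P"
  shows "card (separating_edges R (P - R)) \<le> cr R (P - R)"
proof -
  let ?C = "{(e, f). e \<in> MST R \<and> f \<in> MST (P - R) \<and> convex hull e \<inter> convex hull f \<noteq> {}}"
  have "finite ?C"
    by (rule finite_subset[of _ "MST R \<times> MST (P - R)"]) (use finite_MST[OF g] R in auto)
  moreover have "separating_edges R (P - R) \<subseteq> fst ` ?C"
  proof
    fix e assume e: "e \<in> separating_edges R (P - R)"
    then obtain f where "f \<in> MST (P - R)" "convex hull e \<inter> convex hull f \<noteq> {}"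
      using separating_edge_crosses_MST[OF g cp R] by blast
    moreover have "e \<in> MST R" using e unfolding separating_edges_def by blast
    ultimately show "e \<in> fst ` ?C" by force
  qed
  ultimately have "card (separating_edges R (P - R)) \<le> card (fst ` ?C)"
    by (intro card_mono finite_imageI)
  also have "\<dots> \<le> card ?C" using \<open>finite ?C\<close> by (rule card_image_le)
  finally show ?thesis unfolding cr_def .
qed

definition hull_edges_leaving :: "point set \<Rightarrow> point set \<Rightarrow> (point \<times> point) set" where
  "hull_edges_leaving P R = {h \<in> hull_edges P. fst h \<in> R \<and> snd h \<notin> R}"

lemma hull_edges_leaving_disconnected:
  assumes g: "generic P" and cp: "convex_position P" and R: "R \<subseteq> P"
    and x: "(x, q) \<in> hull_edges_leaving P R" and y: "(y, q') \<in> hull_edges_leaving P R"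
    and "x \<noteq> y"
  shows "(x, y) \<notin> (edge_rel (MST R - separating_edges R (P - R)))\<^sup>*"
proof
  let ?F = "MST R - separating_edges R (P - R)"
  assume path: "(x, y) \<in> (edge_rel ?F)\<^sup>*"
  have hull: "(x, q) \<in> hull_edges P" "(y, q') \<in> hull_edges P" and xy_R: "x \<in> R" "y \<in> R"
    and qq'_B: "q \<in> P - R" "q' \<in> P - R"
    using x y unfolding hull_edges_leaving_def hull_edges_def by auto
  have "q \<noteq> q'" using hull_edges_pred_unique hull \<open>x \<noteq> y\<close> by blast
  then have "orient q q' x > 0" "orient q q' y < 0"
    using hull_edges_separate[OF hull \<open>x \<noteq> y\<close>] xy_R qq'_B by auto
  then obtain u v where uv: "{u, v} \<in> ?F" "u \<in> R" "v \<in> R" "u \<noteq> v"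
      "orient q q' u * orient q q' v < 0"
    using path_edge_crossing_line[OF g _ R _ _ \<open>q \<noteq> q'\<close> _ _ path]
      MST_subset_edges_on[OF g R] qq'_B by blast
  then have "orient u v q * orient u v q' < 0"
    using convex_position_separation_sym[OF g cp, of q u q' v] \<open>q \<noteq> q'\<close> R qq'_B by auto
  with uv(1) qq'_B have "{u, v} \<in> separating_edges R (P - R)"
    unfolding separating_edges_def by blast
  then show False using uv(1) by blast
qed

lemma card_hull_edges_leaving_le:
  assumes g: "generic P" and cp: "convex_position P" and R: "R \<subseteq> P"
  shows "card (hull_edges_leaving P R) \<le> card (separating_edges R (P - R)) + 1"
proof -
  let ?L = "hull_edges_leaving P R" and ?S = "separating_edges R (P - R)"
  have fin_L: "finite ?L"
    using finite_hull_edges[OF generic_finite[OF g]] unfolding hull_edges_leaving_def by auto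
  have "inj_on fst ?L"
    by (rule inj_onI) (auto simp: hull_edges_leaving_def prod_eq_iff dest: hull_edges_succ_unique)
  then have "card ?L = card (fst ` ?L)" by (simp add: card_image)
  also have "\<dots> \<le> card ?S + 1"
  proof (rule card_pairwise_disconnected_le[where F = "MST R - ?S"])
    have "?S \<subseteq> MST R" unfolding separating_edges_def by blast
    then show "finite ?S" using finite_MST[OF g R] finite_subset by blast
    show "\<forall>e\<in>?S. \<exists>a b. e = {a, b}" unfolding separating_edges_def by blast
    show "finite (fst ` ?L)" using fin_L by simp
    have "fst ` ?L \<subseteq> R" unfolding hull_edges_leaving_def by auto
    moreover have "MST R - ?S \<union> ?S = MST R" using \<open>?S \<subseteq> MST R\<close> by blast
    ultimately show
      "\<forall>x\<in>fst ` ?L. \<forall>y\<in>fst ` ?L. (x, y) \<in> (edge_rel (MST R - ?S \<union> ?S))\<^sup>*"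
      using MST_connected[OF g R] by (metis subsetD)
    show
      "\<forall>x\<in>fst ` ?L. \<forall>y\<in>fst ` ?L. x \<noteq> y \<longrightarrow> (x, y) \<notin> (edge_rel (MST R - ?S))\<^sup>*"
      using hull_edges_leaving_disconnected[OF g cp R] by force
  qed
  finally show ?thesis .
qed

section \<open>Averaging over all colourings\<close>

lemma card_subsets_containing_avoiding:
  assumes "finite P" "p \<in> P" "q \<in> P" "p \<noteq> q"
  shows "card {R \<in> Pow P. p \<in> R \<and> q \<notin> R} = 2 ^ (card P - 2)"
proof -
  have "bij_betw (insert p) (Pow (P - {p, q})) {R \<in> Pow P. p \<in> R \<and> q \<notin> R}"
    by (rule bij_betw_byWitness[where f' = "\<lambda>R. R - {p}"]) (use assms in auto)
  then have "card {R \<in> Pow P. p \<in> R \<and> q \<notin> R} = card (Pow (P - {p, q}))"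
    by (simp add: bij_betw_same_card)
  also have "\<dots> = 2 ^ (card P - 2)"
    using assms by (simp add: card_Pow card_Diff_subset)
  finally show ?thesis .
qed

lemma sum_card_hull_edges_leaving:
  assumes "finite P"
  shows "(\<Sum>R\<in>Pow P. card (hull_edges_leaving P R)) = card (hull_edges P) * 2 ^ (card P - 2)"
proof -
  let ?H = "hull_edges P" and ?leaves = "\<lambda>R h. fst h \<in> R \<and> snd h \<notin> R"
  have fin_H: "finite ?H" using finite_hull_edges[OF assms] .
  have card_as_sum: "card {x \<in> A. Q x} = (\<Sum>x\<in>A. if Q x then 1 else 0)"
    if "finite A" for A :: "'a set" and Q
    using sum.inter_filter[OF that, of "\<lambda>_. 1 :: nat" Q] by simp
  have "(\<Sum>R\<in>Pow P. card (hull_edges_leaving P R)) =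
      (\<Sum>R\<in>Pow P. \<Sum>h\<in>?H. if ?leaves R h then 1 else 0)"
    unfolding hull_edges_leaving_def using card_as_sum[OF fin_H] by simp
  also have "\<dots> = (\<Sum>h\<in>?H. \<Sum>R\<in>Pow P. if ?leaves R h then 1 else 0)"
    by (rule sum.swap)
  also have "\<dots> = (\<Sum>h\<in>?H. card {R \<in> Pow P. ?leaves R h})"
    by (rule sum.cong[OF refl], rule card_as_sum[symmetric]) (use assms in simp)
  also have "\<dots> = (\<Sum>h\<in>?H. 2 ^ (card P - 2))"
    by (rule sum.cong[OF refl], rule card_subsets_containing_avoiding[OF assms])
      (auto simp: hull_edges_def)
  finally show ?thesis by simp
qed

lemma sum_cr_lower_bound:
  assumes g: "generic P" and cp: "convex_position P" and two: "2 \<le> card P"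
  shows "card P * 2 ^ (card P - 2) \<le> (\<Sum>R\<in>Pow P. cr R (P - R)) + 2 ^ card P"
proof -
  have fin: "finite P" using generic_finite[OF g] .
  have "card P * 2 ^ (card P - 2) \<le> card (hull_edges P) * 2 ^ (card P - 2)"
    using card_hull_edges_ge[OF g cp two] by simp
  also have "\<dots> = (\<Sum>R\<in>Pow P. card (hull_edges_leaving P R))"
    by (rule sum_card_hull_edges_leaving[OF fin, symmetric])
  also have "\<dots> \<le> (\<Sum>R\<in>Pow P. cr R (P - R) + 1)"
  proof (rule sum_mono)
    fix R assume "R \<in> Pow P"
    then have R: "R \<subseteq> P" by simp
    show "card (hull_edges_leaving P R) \<le> cr R (P - R) + 1"
      using card_hull_edges_leaving_le[OF g cp R] card_separating_edges_le_cr[OF g cp R] by simp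
  qed
  also have "\<dots> = (\<Sum>R\<in>Pow P. cr R (P - R)) + 2 ^ card P"
    using fin by (simp add: sum_Suc card_Pow)
  finally show ?thesis .
qed

theorem lemma4:
  fixes P :: "point set" and n :: nat
  assumes "generic P" and "convex_position P" and "card P = n"
  shows "(\<Sum>R\<in>Pow P. real (cr R (P - R))) / 2 ^ n \<ge> real n / 4 - 1"
proof (cases "2 \<le> n")
  case False
  then have "real n / 4 - 1 < 0" by simp
  moreover have "(\<Sum>R\<in>Pow P. real (cr R (P - R))) / 2 ^ n \<ge> 0" by (simp add: sum_nonneg)
  ultimately show ?thesis by linarith
next
  case True
  have "n * 2 ^ (n - 2) \<le> (\<Sum>R\<in>Pow P. cr R (P - R)) + 2 ^ n"
    using sum_cr_lower_bound[OF assms(1,2)] True assms(3) by simp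
  then have "real (n * 2 ^ (n - 2)) \<le> real ((\<Sum>R\<in>Pow P. cr R (P - R)) + 2 ^ n)"
    by (simp only: of_nat_le_iff)
  then have "(real n * 2 ^ (n - 2) - 2 ^ n) / 2 ^ n \<le> (\<Sum>R\<in>Pow P. real (cr R (P - R))) / 2 ^ n"
    by (simp add: divide_right_mono)
  moreover have "(real n * 2 ^ (n - 2) - 2 ^ n) / 2 ^ n = real n / 4 - 1"
  proof -
    have "n = 2 + (n - 2)" using True by simp
    then have "(2 :: real) ^ n = 2 ^ 2 * 2 ^ (n - 2)" by (metis power_add)
    then show ?thesis by (simp add: field_simps)
  qed
  ultimately show ?thesis by linarith
qed

end
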